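(* Let $n\ge 2$, $d\in\mathbb{R}$, $a\in\mathbb{R}_+^n$ (all $a_i>0$), $b\in\mathbb{R}^n$, and consider the problem of minimizing $f(x)=\sum_{i=1}^n \left(\tfrac12 a_i x_i^2+b_i x_i\right)$ over $x\in\mathbb{R}^n$ subject to $\sum_{i=1}^n x_i=d$. Let $H=\mathrm{diag}(a_1,\dots,a_n)$. Let $L\in\mathbb{R}^{n\times n}$ be the weighted Laplacian of an undirected connected graph on $n$ nodes (so $L=L^\top\succeq 0$, $L\mathbf{1}_n=0$, and $0$ is a simple eigenvalue of $L$). Assume there exists $\varepsilon\in[0,1)$ such that $-\varepsilon I_{n-1}\preceq I_{n-1}-U^\top LHL\,U\preceq \varepsilon I_{n-1}$, where $U\in\mathbb{R}^{n\times(n-1)}$ is any matrix whose columns form an orthonormal basis of $\mathbf{1}_n^\perp$. Fix $q\in\{0,1,2,\dots\}$ and an initial point $x^0$ with $\sum_i x^0_i=d$, and define the iteration $$x^{k+1}=x^k-L\sum_{p=0}^{q}(I_n-LHL)^p\,(Lb+LHx^k),\qquad k\ge 0.$$ Then the problem has a unique optimal solution $x^\star$, every iterate satisfies $\sum_i x^k_i=d$, and $x^\star$ is globally exponentially stable for this iteration: there exist a positive definite quadratic function $V$ on the affine set $\{x:\sum_i x_i=d\}$ with $V(x^\star)=0$ and a constant $\hat c\in(0,1)$ independent of $k$ and $x^0$ such that $V(x^{k+1})\le (1-\hat c)V(x^k)$ for all $k$; in particular $x^k\to x^\star$ exponentially fast.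
   Context: This iteration is the "distributed approx-Newton" algorithm (DANA) with unit step size: the term $-\sum_{p=0}^q(I_n-LHL)^p(Lb+LHx^k)$ is a truncated Taylor-series ($q$-approximation) of a Newton step for the reformulated unconstrained problem $\min_z f(x^k+Lz)$. $\mathbf{1}_n$ denotes the all-ones vector and $\mathbf{1}_n^\perp$ its orthogonal complement. *)

theory Defs
  imports "HOL-Analysis.Analysis"
begin

definition diag_mat :: "real ^ 'n \<Rightarrow> real ^ 'n ^ 'n" where
  "diag_mat a = (\<chi> i j. if i = j then a $ i else 0)"

text \<open>Matrix power (the type real^'n^'n carries a componentwise power, so we define the matrix one).\<close>
fun mat_pow :: "real ^ 'n ^ 'n \<Rightarrow> nat \<Rightarrow> real ^ 'n ^ 'n" where
  "mat_pow A 0 = mat 1"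
| "mat_pow A (Suc p) = A ** mat_pow A p"

definition loewner_le :: "real ^ 'm ^ 'm \<Rightarrow> real ^ 'm ^ 'm \<Rightarrow> bool" where
  "loewner_le A B \<longleftrightarrow> (\<forall>y. y \<bullet> (A *v y) \<le> y \<bullet> (B *v y))"

definition ones :: "real ^ 'n" where
  "ones = (\<chi> i. 1)"

definition weighted_laplacian_connected :: "real ^ 'n ^ 'n \<Rightarrow> bool" where
  "weighted_laplacian_connected L \<longleftrightarrow>
     (\<exists>w :: 'n \<Rightarrow> 'n \<Rightarrow> real.
        (\<forall>i j. w i j = w j i) \<and> (\<forall>i j. 0 \<le> w i j) \<and> (\<forall>i. w i i = 0) \<and>
        (\<forall>i j. L $ i $ j = (if i = j then (\<Sum>k\<in>UNIV. w i k) else - w i j)) \<and>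
        (\<forall>i j. (\<lambda>u v. 0 < w u v)\<^sup>*\<^sup>* i j))"

definition quad_obj :: "real ^ 'n \<Rightarrow> real ^ 'n \<Rightarrow> real ^ 'n \<Rightarrow> real" where
  "quad_obj a b x = (\<Sum>i\<in>UNIV. (1/2) * a $ i * (x $ i)\<^sup>2 + b $ i * x $ i)"

definition feasible :: "real \<Rightarrow> real ^ 'n \<Rightarrow> bool" where
  "feasible d x \<longleftrightarrow> (\<Sum>i\<in>UNIV. x $ i) = d"

definition is_optimal :: "real ^ 'n \<Rightarrow> real ^ 'n \<Rightarrow> real \<Rightarrow> real ^ 'n \<Rightarrow> bool" where
  "is_optimal a b d x \<longleftrightarrow> feasible d x \<and> (\<forall>y. feasible d y \<longrightarrow> quad_obj a b x \<le> quad_obj a b y)"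

definition dana_step :: "real ^ 'n ^ 'n \<Rightarrow> real ^ 'n \<Rightarrow> real ^ 'n \<Rightarrow> nat \<Rightarrow> real ^ 'n \<Rightarrow> real ^ 'n" where
  "dana_step L a b q x =
     x - L *v ((\<Sum>p\<in>{0..q}. mat_pow (mat 1 - L ** diag_mat a ** L) p)
               *v (L *v b + L *v (diag_mat a *v x)))"

end

theory Submission
  imports Defs
begin

text \<open>
  The optimum x* is the feasible point at which the gradient b + H x is a multiple of the
  all-ones vector, and then f y - f x* = \<Sum>i. a_i/2 (y_i - x*_i)^2 for every feasible y.
  Since L annihilates the all-ones vector, DANA preserves \<Sum>i. x_i, and the projected gradient
  g = L (b + H x) = L H (x - x*) evolves as g' = (I - LHL)^(q+1) g, because the truncated
  Newton series telescopes: LHL \<Sum>p\<le>q. (I - LHL)^p = I - (I - LHL)^(q+1).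
  The Loewner hypothesis bounds the quadratic form of the symmetric matrix I - LHL by \<epsilon> on the
  hyperplane W orthogonal to the all-ones vector, so by polarization I - LHL is an
  \<epsilon>-contraction of W. Hence V x = \<parallel>g\<parallel>^2 = (x - x*)^T HLLH (x - x*) contracts by the factor
  \<epsilon>^(2q+2) along the iteration, and V is positive definite on the feasible set because the
  same bound with \<epsilon> < 1 makes LH injective on W.
\<close>

section \<open>Matrices and quadratic forms\<close>

lemma inner_matrix_symmetric:
  fixes A :: "real ^ 'n ^ 'n"
  assumes "transpose A = A"
  shows "x \<bullet> (A *v y) = (A *v x) \<bullet> y"
  by (metis assms dot_lmul_matrix vector_transpose_matrix)

lemma transpose_diag_mat: "transpose (diag_mat a) = diag_mat a"
  by (simp add: transpose_def diag_mat_def vec_eq_iff)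

lemma diag_mat_mult_vec: "diag_mat a *v x = (\<chi> i. a $ i * x $ i)"
proof -
  have "(\<Sum>j\<in>UNIV. (if i = j then a $ i else 0) * x $ j)
      = (\<Sum>j\<in>UNIV. if j = i then a $ i * x $ i else 0)" for i
    by (rule sum.cong) auto
  then show ?thesis
    by (simp add: diag_mat_def matrix_vector_mult_def vec_eq_iff)
qed

lemma inner_ones: "ones \<bullet> v = (\<Sum>i\<in>UNIV. v $ i)"
  by (simp add: ones_def inner_vec_def)

lemma mat_pow_geometric_sum:
  "(mat 1 - B) *v ((\<Sum>p\<in>{0..q}. mat_pow B p) *v g) = g - mat_pow B (Suc q) *v g"
proof (induction q)
  case 0
  then show ?case by (simp add: matrix_vector_mult_diff_rdistrib)
next
  case (Suc q)
  then show ?case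
    by (simp add: sum.atLeast0_atMost_Suc matrix_vector_mult_add_rdistrib
        matrix_vector_right_distrib matrix_vector_mult_diff_rdistrib
        matrix_vector_mul_assoc[symmetric])
qed

lemma weighted_laplacian_transpose:
  assumes "weighted_laplacian_connected L"
  shows "transpose L = L"
  using assms unfolding weighted_laplacian_connected_def transpose_def
  by (auto simp: vec_eq_iff)

lemma weighted_laplacian_ones:
  assumes "weighted_laplacian_connected L"
  shows "L *v ones = 0"
proof -
  from assms obtain w where "\<forall>i. w i i = 0"
    and "\<forall>i j. L $ i $ j = (if i = j then (\<Sum>k\<in>UNIV. w i k) else - w i j)"
    unfolding weighted_laplacian_connected_def by blast
  then have "L $ i $ j = (if i = j then (\<Sum>k\<in>UNIV. w i k) else 0) - w i j" for i j
    by auto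
  then show ?thesis
    by (simp add: vec_eq_iff matrix_vector_mult_def ones_def sum_subtractf)
qed

lemma norm_le_of_quadratic_form_bound:
  fixes f :: "'a::real_inner \<Rightarrow> 'a"
  assumes "linear f"
    and sym: "\<And>x y. x \<bullet> f y = f x \<bullet> y"
    and "subspace W" and f_W: "\<And>v. v \<in> W \<Longrightarrow> f v \<in> W"
    and bound: "\<And>v. v \<in> W \<Longrightarrow> \<bar>v \<bullet> f v\<bar> \<le> \<epsilon> * (v \<bullet> v)"
    and "v \<in> W"
  shows "norm (f v) \<le> \<epsilon> * norm v"
proof (cases "f v = 0")
  case True
  have "0 \<le> \<epsilon> * norm v"
  proof (cases "v = 0")
    case False
    then have "0 < v \<bullet> v" by simp
    moreover have "0 \<le> \<epsilon> * (v \<bullet> v)" using bound[OF \<open>v \<in> W\<close>] by linarith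
    ultimately have "0 \<le> \<epsilon>" by (meson mult_neg_pos not_le)
    then show ?thesis by simp
  qed simp
  with True show ?thesis by simp
next
  case False
  have "v \<noteq> 0" using False \<open>linear f\<close> linear_0 by auto
  define u where "u = (norm v / norm (f v)) *\<^sub>R f v"
  have "u \<in> W" unfolding u_def using f_W \<open>v \<in> W\<close> \<open>subspace W\<close> subspace_scale by blast
  then have "v + u \<in> W" "v - u \<in> W" using \<open>v \<in> W\<close> \<open>subspace W\<close> subspace_add subspace_diff by blast+
  \<comment> \<open>polarization, with u the multiple of f v whose norm is that of v\<close>
  have "4 * (u \<bullet> f v) = (v + u) \<bullet> f (v + u) - (v - u) \<bullet> f (v - u)"
    using sym[of u v] \<open>linear f\<close>
    by (simp add: linear_add linear_diff inner_add_left inner_add_right inner_diff_left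
        inner_diff_right inner_commute)
  also have "\<dots> \<le> \<epsilon> * ((v + u) \<bullet> (v + u)) + \<epsilon> * ((v - u) \<bullet> (v - u))"
    using bound[OF \<open>v + u \<in> W\<close>] bound[OF \<open>v - u \<in> W\<close>] by linarith
  also have "\<dots> = 2 * \<epsilon> * (v \<bullet> v + u \<bullet> u)"
    by (simp add: inner_add_left inner_add_right inner_diff_left inner_diff_right
        inner_commute algebra_simps)
  finally have "4 * (norm v * norm (f v)) \<le> 4 * \<epsilon> * (norm v * norm v)"
    using False by (simp add: u_def dot_square_norm power2_eq_square)
  then show ?thesis
    using \<open>v \<noteq> 0\<close> by (simp add: mult.assoc mult.left_commute[of \<epsilon>])
qed

lemma inner_columns_orthonormal:
  fixes U :: "real ^ 'm ^ 'n"
  assumes "transpose U ** U = mat 1"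
  shows "column j U \<bullet> column k U = (if j = k then 1 else 0)"
proof -
  have "(transpose U ** U) $ j $ k = column j U \<bullet> column k U"
    by (simp add: matrix_matrix_mult_def transpose_def column_def inner_vec_def)
  then show ?thesis
    using assms by (simp add: mat_def)
qed

lemma orthonormal_columns_span_hyperplane:
  fixes U :: "real ^ 'm ^ 'n" and c :: "real ^ 'n"
  assumes "c \<noteq> 0" and dim: "CARD('m) + 1 = CARD('n)"
    and orth: "transpose U ** U = mat 1" and perp: "\<forall>j. column j U \<bullet> c = 0"
    and "c \<bullet> v = 0"
  shows "U *v (transpose U *v v) = v"
proof -
  note cols = inner_columns_orthonormal[OF orth]
  define C where "C = range (\<lambda>j. column j U)"
  have "inj (\<lambda>j. column j U)"
  proof (rule injI)
    fix j k assume "column j U = column k U"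
    then have "column j U \<bullet> column k U = 1" using cols[of k k] by simp
    then show "j = k" using cols[of j k] by (auto split: if_splits)
  qed
  then have card_C: "card C = CARD('m)" unfolding C_def by (simp add: card_image)
  have "independent C"
  proof (rule pairwise_orthogonal_independent)
    show "pairwise orthogonal C"
      unfolding C_def pairwise_def orthogonal_def using cols by auto
    show "0 \<notin> C"
    proof
      assume "0 \<in> C"
      then obtain j where "column j U = 0" unfolding C_def by auto
      with cols[of j j] show False by simp
    qed
  qed
  define W where "W = {x. c \<bullet> x = 0}"
  have "C \<subseteq> W" unfolding C_def W_def using perp by (auto simp: inner_commute)
  moreover have "dim W = CARD('m)"
    unfolding W_def using dim_hyperplane[OF \<open>c \<noteq> 0\<close>] dim by simp
  ultimately have "W \<subseteq> span C"
    using card_eq_dim[of C W] card_C \<open>independent C\<close> unfolding C_def by simp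
  moreover have "span C \<subseteq> range (\<lambda>y. U *v y)"
  proof (rule span_minimal)
    show "C \<subseteq> range (\<lambda>y. U *v y)"
      unfolding C_def by (auto simp: matrix_vector_mult_basis[symmetric])
    show "subspace (range (\<lambda>y. U *v y))"
      by (rule linear_subspace_image) (auto simp: subspace_UNIV)
  qed
  ultimately obtain y where "v = U *v y"
    using \<open>c \<bullet> v = 0\<close> unfolding W_def by auto
  then show ?thesis using orth by (simp add: matrix_vector_mul_assoc)
qed

lemma quadratic_form_bound_of_loewner_bounds:
  fixes M :: "real ^ 'n ^ 'n" and U :: "real ^ 'm ^ 'n"
  assumes orth: "transpose U ** U = mat 1"
    and lower: "loewner_le (- (\<epsilon> *\<^sub>R mat 1)) (mat 1 - transpose U ** M ** U)"
    and upper: "loewner_le (mat 1 - transpose U ** M ** U) (\<epsilon> *\<^sub>R mat 1)"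
  shows "\<bar>(U *v y) \<bullet> ((mat 1 - M) *v (U *v y))\<bar> \<le> \<epsilon> * ((U *v y) \<bullet> (U *v y))"
proof -
  define v where "v = U *v y"
  have adj: "z \<bullet> (transpose U *v w) = (U *v z) \<bullet> w" for z w
    by (metis dot_lmul_matrix vector_transpose_matrix)
  have UU: "transpose U *v (U *v y) = y"
    using orth by (simp add: matrix_vector_mul_assoc)
  have "v \<bullet> v = y \<bullet> (transpose U *v (U *v y))"
    unfolding v_def by (rule adj[symmetric])
  then have vv: "v \<bullet> v = y \<bullet> y"
    by (simp only: UU)
  have form: "v \<bullet> ((mat 1 - M) *v v) = y \<bullet> ((mat 1 - transpose U ** M ** U) *v y)"
    using vv adj[of y "M *v (U *v y)"] v_def
    by (simp add: matrix_vector_mult_diff_rdistrib inner_diff_right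
        matrix_vector_mul_assoc[symmetric])
  have scaled_id: "(c *\<^sub>R mat 1) *v z = c *\<^sub>R z" for c :: real and z :: "real ^ 'm"
    by (simp add: scaleR_matrix_vector_assoc[symmetric])
  have "- (\<epsilon> * (y \<bullet> y)) \<le> y \<bullet> ((mat 1 - transpose U ** M ** U) *v y)"
    using lower scaled_id[of "- \<epsilon>"] unfolding loewner_le_def by (metis scaleR_minus_left inner_minus_right inner_scaleR_right)
  moreover have "y \<bullet> ((mat 1 - transpose U ** M ** U) *v y) \<le> \<epsilon> * (y \<bullet> y)"
    using upper unfolding loewner_le_def by (simp add: scaled_id)
  ultimately show ?thesis using form vv by (simp add: v_def abs_le_iff)
qed

section \<open>The optimum\<close>

lemma quad_obj_diff_of_constant_gradient:
  fixes a b x y :: "real ^ 'n"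
  assumes grad: "\<And>i. a $ i * x $ i + b $ i = lam"
    and same_sum: "(\<Sum>i\<in>UNIV. y $ i) = (\<Sum>i\<in>UNIV. x $ i)"
  shows "quad_obj a b y - quad_obj a b x = (\<Sum>i\<in>UNIV. a $ i / 2 * (y $ i - x $ i)\<^sup>2)"
proof -
  have "a $ i / 2 * (y $ i)\<^sup>2 + b $ i * y $ i - (a $ i / 2 * (x $ i)\<^sup>2 + b $ i * x $ i)
      = a $ i / 2 * (y $ i - x $ i)\<^sup>2 + lam * (y $ i - x $ i)" for i
    unfolding grad[of i, symmetric] by (simp add: power2_eq_square algebra_simps)
  then have "quad_obj a b y - quad_obj a b x
      = (\<Sum>i\<in>UNIV. a $ i / 2 * (y $ i - x $ i)\<^sup>2) + lam * (\<Sum>i\<in>UNIV. y $ i - x $ i)"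
    unfolding quad_obj_def sum_subtractf[symmetric] by (simp add: sum.distrib sum_distrib_left)
  then show ?thesis using same_sum by (simp add: sum_subtractf)
qed

lemma optimal_iff_of_constant_gradient:
  fixes a b x y :: "real ^ 'n"
  assumes pos: "\<And>i. 0 < a $ i" and "feasible d x"
    and grad: "\<And>i. a $ i * x $ i + b $ i = lam"
  shows "is_optimal a b d y \<longleftrightarrow> y = x"
proof -
  have gap: "quad_obj a b z - quad_obj a b x = (\<Sum>i\<in>UNIV. a $ i / 2 * (z $ i - x $ i)\<^sup>2)"
    if "feasible d z" for z
    using quad_obj_diff_of_constant_gradient[OF grad] that \<open>feasible d x\<close>
    by (simp add: feasible_def)
  have nonneg: "0 \<le> a $ i / 2 * (z $ i - x $ i)\<^sup>2" for z i
    using pos[of i] by simp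
  have "is_optimal a b d x"
    unfolding is_optimal_def
  proof (intro conjI allI impI \<open>feasible d x\<close>)
    fix z :: "real ^ 'n" assume "feasible d z"
    moreover have "0 \<le> (\<Sum>i\<in>UNIV. a $ i / 2 * (z $ i - x $ i)\<^sup>2)"
      by (intro sum_nonneg nonneg)
    ultimately show "quad_obj a b x \<le> quad_obj a b z"
      using gap by fastforce
  qed
  moreover have "y = x" if "is_optimal a b d y"
  proof -
    have "feasible d y" and "quad_obj a b y \<le> quad_obj a b x"
      using that \<open>feasible d x\<close> unfolding is_optimal_def by auto
    moreover have "0 \<le> (\<Sum>i\<in>UNIV. a $ i / 2 * (y $ i - x $ i)\<^sup>2)"
      by (intro sum_nonneg nonneg)
    ultimately have "(\<Sum>i\<in>UNIV. a $ i / 2 * (y $ i - x $ i)\<^sup>2) = 0"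
      using gap by fastforce
    then have zero: "a $ i / 2 * (y $ i - x $ i)\<^sup>2 = 0" for i
      by (subst (asm) sum_nonneg_eq_0_iff) (simp_all add: pos less_imp_le)
    have "y $ i = x $ i" for i
      using zero[of i] pos[of i] by auto
    then show "y = x"
      by (simp add: vec_eq_iff)
  qed
  ultimately show ?thesis by blast
qed

lemma exists_feasible_constant_gradient:
  assumes pos: "\<And>i. 0 < a $ i"
  shows "\<exists>x lam. feasible d x \<and> (\<forall>i. a $ i * x $ i + b $ i = lam)"
proof -
  define lam where "lam = (d + (\<Sum>i\<in>UNIV. b $ i / a $ i)) / (\<Sum>i\<in>UNIV. 1 / a $ i)"
  define x where "x = (\<chi> i. (lam - b $ i) / a $ i)"
  have "0 < (\<Sum>i\<in>UNIV. 1 / a $ i)"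
    by (rule sum_pos) (auto simp: pos)
  have "(\<Sum>i\<in>UNIV. x $ i) = lam * (\<Sum>i\<in>UNIV. 1 / a $ i) - (\<Sum>i\<in>UNIV. b $ i / a $ i)"
    by (simp add: x_def diff_divide_distrib sum_subtractf sum_distrib_left)
  also have "\<dots> = d"
    using \<open>0 < (\<Sum>i\<in>UNIV. 1 / a $ i)\<close> by (simp add: lam_def)
  finally have "(\<Sum>i\<in>UNIV. x $ i) = d" .
  moreover have "a $ i * x $ i + b $ i = lam" for i
    using pos[of i] by (simp add: x_def)
  ultimately show ?thesis unfolding feasible_def by blast
qed

section \<open>Quadratic Lyapunov functions\<close>

lemma quadratic_form_le_norm_squared:
  fixes P :: "real ^ 'n ^ 'n"
  shows "\<exists>K\<ge>0. \<forall>e. e \<bullet> (P *v e) \<le> K * (norm e)\<^sup>2"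
proof -
  obtain K where "K > 0" and K: "\<And>e. norm (P *v e) \<le> norm e * K"
    using bounded_linear.pos_bounded[OF matrix_vector_mul_bounded_linear] by blast
  have "e \<bullet> (P *v e) \<le> K * (norm e)\<^sup>2" for e
  proof -
    have "e \<bullet> (P *v e) \<le> norm e * norm (P *v e)"
      by (rule norm_cauchy_schwarz)
    also have "\<dots> \<le> norm e * (norm e * K)"
      using K by (simp add: mult_left_mono)
    finally show ?thesis by (simp add: power2_eq_square ac_simps)
  qed
  then show ?thesis using \<open>K > 0\<close> by (intro exI[of _ K]) auto
qed

lemma geometric_decay_of_lyapunov:
  fixes V e :: "nat \<Rightarrow> real"
  assumes decrease: "\<And>k. V (Suc k) \<le> r * V k" and "0 \<le> r"
    and lower: "\<And>k. m * (e k)\<^sup>2 \<le> V k" and "0 < m"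
    and upper: "V 0 \<le> K * (e 0)\<^sup>2" and "0 \<le> K" and "0 \<le> e 0"
  shows "e k \<le> sqrt (K / m) * sqrt r ^ k * e 0"
proof -
  have "V k \<le> r ^ k * V 0"
  proof (induction k)
    case (Suc k)
    have "r * V k \<le> r * (r ^ k * V 0)"
      using Suc \<open>0 \<le> r\<close> by (rule mult_left_mono)
    with decrease[of k] show ?case by simp
  qed simp
  also have "\<dots> \<le> r ^ k * (K * (e 0)\<^sup>2)"
    using upper \<open>0 \<le> r\<close> by (simp add: mult_left_mono)
  finally have "m * (e k)\<^sup>2 \<le> m * (K / m * r ^ k * (e 0)\<^sup>2)"
    using lower[of k] \<open>0 < m\<close> by (simp add: ac_simps)
  then have "(e k)\<^sup>2 \<le> K / m * r ^ k * (e 0)\<^sup>2"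
    using \<open>0 < m\<close> by (rule mult_left_le_imp_le)
  also have "\<dots> = (sqrt (K / m) * sqrt r ^ k * e 0)\<^sup>2"
  proof -
    have "(sqrt r ^ k)\<^sup>2 = r ^ k"
      using \<open>0 \<le> r\<close> by (simp flip: real_sqrt_power)
    then show ?thesis
      using \<open>0 < m\<close> \<open>0 \<le> K\<close> by (simp add: power_mult_distrib)
  qed
  finally show ?thesis
    by (rule power2_le_imp_le) (use \<open>0 \<le> r\<close> \<open>0 \<le> K\<close> \<open>0 < m\<close> \<open>0 \<le> e 0\<close> in simp)
qed

lemma exponential_convergence_of_quadratic_lyapunov:
  fixes P :: "real ^ 'n ^ 'n" and f :: "real ^ 'n \<Rightarrow> real ^ 'n"
  assumes "0 < m" and lower: "\<And>z. S z \<Longrightarrow> m * (norm (z - xs))\<^sup>2 \<le> (z - xs) \<bullet> (P *v (z - xs))"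
    and "0 < c" "c < 1"
    and invariant: "\<And>z. S z \<Longrightarrow> S (f z)"
    and decrease: "\<And>z. (f z - xs) \<bullet> (P *v (f z - xs)) \<le> (1 - c) * ((z - xs) \<bullet> (P *v (z - xs)))"
  shows "\<exists>M \<rho>. 0 \<le> M \<and> 0 \<le> \<rho> \<and> \<rho> < 1 \<and>
           (\<forall>x. S (x 0) \<and> (\<forall>k. x (Suc k) = f (x k))
              \<longrightarrow> (\<forall>k. norm (x k - xs) \<le> M * \<rho> ^ k * norm (x 0 - xs)))"
proof -
  obtain K where "K \<ge> 0" and upper: "\<And>e. e \<bullet> (P *v e) \<le> K * (norm e)\<^sup>2"
    using quadratic_form_le_norm_squared[of P] by blast
  show ?thesis
  proof (rule exI[of _ "sqrt (K / m)"], rule exI[of _ "sqrt (1 - c)"], intro conjI allI impI)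
    fix x :: "nat \<Rightarrow> real ^ 'n" and k
    assume x: "S (x 0) \<and> (\<forall>k. x (Suc k) = f (x k))"
    then have "S (x k)" for k
      by (induction k) (auto intro: invariant)
    then show "norm (x k - xs) \<le> sqrt (K / m) * sqrt (1 - c) ^ k * norm (x 0 - xs)"
      using \<open>0 < m\<close> \<open>K \<ge> 0\<close> \<open>c < 1\<close> x
      by (intro geometric_decay_of_lyapunov[where V = "\<lambda>k. (x k - xs) \<bullet> (P *v (x k - xs))"])
        (auto intro: decrease lower upper)
  qed (use \<open>0 < m\<close> \<open>K \<ge> 0\<close> \<open>0 < c\<close> \<open>c < 1\<close> in auto)
qed

section \<open>Convergence of the iteration\<close>

definition laplacian_gradient ::
    "real ^ 'n ^ 'n \<Rightarrow> real ^ 'n \<Rightarrow> real ^ 'n \<Rightarrow> real ^ 'n \<Rightarrow> real ^ 'n" where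
  "laplacian_gradient L a b z = L *v (b + diag_mat a *v z)"

definition dana_lyapunov :: "real ^ 'n ^ 'n \<Rightarrow> real ^ 'n \<Rightarrow> real ^ 'n ^ 'n" where
  "dana_lyapunov L a = diag_mat a ** L ** L ** diag_mat a"

lemma laplacian_gradient_dana_step:
  "laplacian_gradient L a b (dana_step L a b q z)
     = mat_pow (mat 1 - L ** diag_mat a ** L) (Suc q) *v laplacian_gradient L a b z"
proof -
  define R where "R = mat 1 - L ** diag_mat a ** L"
  define g where "g = laplacian_gradient L a b z"
  define w where "w = (\<Sum>p\<in>{0..q}. mat_pow R p) *v g"
  have "dana_step L a b q z = z - L *v w"
    by (simp add: dana_step_def w_def g_def R_def laplacian_gradient_def matrix_vector_right_distrib)
  then have "laplacian_gradient L a b (dana_step L a b q z) = g - (mat 1 - R) *v w"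
    by (simp add: laplacian_gradient_def g_def R_def matrix_vector_right_distrib
        matrix_vector_mult_diff_distrib matrix_vector_mult_diff_rdistrib
        matrix_vector_mul_assoc[symmetric])
  also have "\<dots> = mat_pow R (Suc q) *v g"
    unfolding w_def mat_pow_geometric_sum by simp
  finally show ?thesis unfolding R_def g_def .
qed

lemma laplacian_gradient_eq:
  assumes "L *v ones = 0" and grad: "\<And>i. a $ i * xs $ i + b $ i = lam"
  shows "laplacian_gradient L a b z = L *v (diag_mat a *v (z - xs))"
proof -
  have "b + diag_mat a *v xs = lam *\<^sub>R ones"
    using grad by (simp add: vec_eq_iff diag_mat_mult_vec ones_def algebra_simps)
  then have "b + diag_mat a *v z = diag_mat a *v (z - xs) + lam *\<^sub>R ones"
    by (simp add: matrix_vector_mult_diff_distrib algebra_simps)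
  then show ?thesis
    using assms(1) by (simp add: laplacian_gradient_def matrix_vector_right_distrib
        matrix_vector_mult_scaleR)
qed

lemma quadratic_form_dana_lyapunov:
  assumes "transpose L = L"
  shows "e \<bullet> (dana_lyapunov L a *v e) = (norm (L *v (diag_mat a *v e)))\<^sup>2"
proof -
  have "e \<bullet> (dana_lyapunov L a *v e) = e \<bullet> (diag_mat a *v (L *v (L *v (diag_mat a *v e))))"
    by (simp add: dana_lyapunov_def matrix_vector_mul_assoc[symmetric])
  also have "\<dots> = (L *v (diag_mat a *v e)) \<bullet> (L *v (diag_mat a *v e))"
    by (metis assms inner_matrix_symmetric transpose_diag_mat)
  finally show ?thesis by (simp add: dot_square_norm)
qed

lemma transpose_dana_lyapunov:
  assumes "transpose L = L"
  shows "transpose (dana_lyapunov L a) = dana_lyapunov L a"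
  using assms by (simp add: dana_lyapunov_def matrix_transpose_mul transpose_diag_mat matrix_mul_assoc)

locale dana_setting =
  fixes a :: "real ^ 'n" and L :: "real ^ 'n ^ 'n" and \<epsilon> :: real
  assumes a_pos: "\<And>i. 0 < a $ i"
    and L_symmetric: "transpose L = L"
    and L_ones: "L *v ones = 0"
    and residual_form_bound:
      "\<And>v. ones \<bullet> v = 0 \<Longrightarrow> \<bar>v \<bullet> ((mat 1 - L ** diag_mat a ** L) *v v)\<bar> \<le> \<epsilon> * (v \<bullet> v)"
    and eps_nonneg: "0 \<le> \<epsilon>" and eps_less_1: "\<epsilon> < 1"
begin

abbreviation residual :: "real ^ 'n ^ 'n" where
  "residual \<equiv> mat 1 - L ** diag_mat a ** L"

lemma residual_mult_vec: "residual *v v = v - L *v (diag_mat a *v (L *v v))"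
  by (simp add: matrix_vector_mult_diff_rdistrib matrix_vector_mul_assoc[symmetric])

lemma ones_inner_L: "ones \<bullet> (L *v u) = 0"
  using inner_matrix_symmetric[OF L_symmetric] L_ones by simp

lemma ones_inner_residual: "ones \<bullet> v = 0 \<Longrightarrow> ones \<bullet> (residual *v v) = 0"
  by (simp add: residual_mult_vec inner_diff_right ones_inner_L)

lemma norm_residual_le: "ones \<bullet> v = 0 \<Longrightarrow> norm (residual *v v) \<le> \<epsilon> * norm v"
proof (rule norm_le_of_quadratic_form_bound[where W = "{v. ones \<bullet> v = 0}"])
  fix x y :: "real ^ 'n"
  have "x \<bullet> (L *v (diag_mat a *v (L *v y))) = (L *v (diag_mat a *v (L *v x))) \<bullet> y"
    using inner_matrix_symmetric[OF L_symmetric] inner_matrix_symmetric[OF transpose_diag_mat]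
    by metis
  then show "x \<bullet> (residual *v y) = (residual *v x) \<bullet> y"
    by (simp add: residual_mult_vec inner_diff_left inner_diff_right)
qed (auto simp: matrix_vector_mul_linear subspace_hyperplane ones_inner_residual residual_form_bound)

lemma norm_residual_pow_le:
  assumes "ones \<bullet> v = 0"
  shows "norm (mat_pow residual p *v v) \<le> \<epsilon> ^ p * norm v \<and> ones \<bullet> (mat_pow residual p *v v) = 0"
proof (induction p)
  case (Suc p)
  have "norm (mat_pow residual (Suc p) *v v) \<le> \<epsilon> * norm (mat_pow residual p *v v)"
    using norm_residual_le Suc.IH by (simp add: matrix_vector_mul_assoc[symmetric])
  also have "\<dots> \<le> \<epsilon> * (\<epsilon> ^ p * norm v)"
    using Suc.IH eps_nonneg by (intro mult_left_mono) auto
  finally show ?case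
    using Suc.IH ones_inner_residual by (simp add: matrix_vector_mul_assoc[symmetric])
qed (simp add: assms)

lemma L_diag_injective_on_hyperplane:
  assumes "ones \<bullet> e = 0" and "L *v (diag_mat a *v e) = 0"
  shows "e = 0"
proof -
  \<comment> \<open>H e lies in the kernel of L; its component u orthogonal to the all-ones vector is then
    fixed by the residual, which the form bound with \<epsilon> < 1 allows only for u = 0\<close>
  define \<alpha> where "\<alpha> = (ones \<bullet> (diag_mat a *v e)) / real CARD('n)"
  define u where "u = diag_mat a *v e - \<alpha> *\<^sub>R ones"
  have "ones \<bullet> (ones :: real ^ 'n) = real CARD('n)"
    by (simp add: ones_def inner_vec_def)
  then have "ones \<bullet> u = 0"
    by (simp add: u_def \<alpha>_def inner_diff_right)
  moreover have "L *v u = 0"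
    using assms(2) L_ones by (simp add: u_def matrix_vector_mult_diff_distrib matrix_vector_mult_scaleR)
  ultimately have "u \<bullet> u \<le> \<epsilon> * (u \<bullet> u)"
    using residual_form_bound[of u] by (simp add: residual_mult_vec)
  then have "u = 0"
    using eps_less_1 by (smt (verit) inner_ge_zero inner_eq_zero_iff mult_le_cancel_right1)
  then have e: "e $ i = \<alpha> * (1 / a $ i)" for i
    using a_pos[of i] by (simp add: u_def vec_eq_iff diag_mat_mult_vec ones_def field_simps)
  have "0 = (\<Sum>i\<in>UNIV. e $ i)"
    using assms(1) by (simp add: inner_ones)
  also have "\<dots> = \<alpha> * (\<Sum>i\<in>UNIV. 1 / a $ i)"
    by (simp add: e sum_distrib_left)
  finally have "\<alpha> = 0"
    using sum_pos[of UNIV "\<lambda>i. 1 / a $ i"] a_pos by auto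
  then show "e = 0"
    using e by (simp add: vec_eq_iff)
qed

lemma L_diag_coercive_on_hyperplane:
  "\<exists>m>0. \<forall>e. ones \<bullet> e = 0 \<longrightarrow> m * (norm e)\<^sup>2 \<le> (norm (L *v (diag_mat a *v e)))\<^sup>2"
proof -
  have "bounded_linear (\<lambda>e. L *v (diag_mat a *v e))"
    by (intro bounded_linear_compose[OF matrix_vector_mul_bounded_linear]
        matrix_vector_mul_bounded_linear)
  then obtain c where "c > 0"
    and c: "\<forall>e\<in>{e. ones \<bullet> e = 0}. c * norm e \<le> norm (L *v (diag_mat a *v e))"
    using injective_imp_isometric[OF closed_subspace subspace_hyperplane]
      subspace_hyperplane L_diag_injective_on_hyperplane by blast
  have "(c * norm e)\<^sup>2 \<le> (norm (L *v (diag_mat a *v e)))\<^sup>2" if "ones \<bullet> e = 0" for e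
    using c that \<open>c > 0\<close> by (intro power_mono) auto
  then show ?thesis
    using \<open>c > 0\<close> by (intro exI[of _ "c\<^sup>2"]) (simp add: power_mult_distrib)
qed

lemma feasible_dana_step:
  assumes "feasible d z"
  shows "feasible d (dana_step L a b q z)"
proof -
  have "ones \<bullet> dana_step L a b q z = ones \<bullet> z"
    by (simp add: dana_step_def inner_diff_right ones_inner_L)
  then show ?thesis
    using assms by (simp add: feasible_def inner_ones)
qed

lemma feasible_dana_iterates:
  assumes "feasible d (x 0)" and "\<And>k. x (Suc k) = dana_step L a b q (x k)"
  shows "feasible d (x k)"
  by (induction k) (simp_all add: assms feasible_dana_step)

lemma norm_laplacian_gradient_dana_step:
  "norm (laplacian_gradient L a b (dana_step L a b q z))
     \<le> \<epsilon> ^ Suc q * norm (laplacian_gradient L a b z)"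
proof -
  have "ones \<bullet> laplacian_gradient L a b z = 0"
    by (simp add: laplacian_gradient_def ones_inner_L)
  then show ?thesis
    unfolding laplacian_gradient_dana_step using norm_residual_pow_le by blast
qed

lemma dana_lyapunov_eq:
  assumes "\<And>i. a $ i * xs $ i + b $ i = lam"
  shows "(z - xs) \<bullet> (dana_lyapunov L a *v (z - xs)) = (norm (laplacian_gradient L a b z))\<^sup>2"
  using quadratic_form_dana_lyapunov[OF L_symmetric] laplacian_gradient_eq[OF L_ones assms]
  by simp

lemma dana_lyapunov_coercive:
  assumes "feasible d xs"
  shows "\<exists>m>0. \<forall>z. feasible d z \<longrightarrow> m * (norm (z - xs))\<^sup>2 \<le> (z - xs) \<bullet> (dana_lyapunov L a *v (z - xs))"
proof -
  have "ones \<bullet> (z - xs) = 0" if "feasible d z" for z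
    using that assms by (simp add: feasible_def inner_ones inner_diff_right)
  moreover obtain m where "m > 0"
    and "\<forall>e. ones \<bullet> e = 0 \<longrightarrow> m * (norm e)\<^sup>2 \<le> (norm (L *v (diag_mat a *v e)))\<^sup>2"
    using L_diag_coercive_on_hyperplane by blast
  ultimately show ?thesis
    by (intro exI[of _ m]) (simp add: quadratic_form_dana_lyapunov[OF L_symmetric])
qed

lemma dana_lyapunov_contraction:
  assumes grad: "\<And>i. a $ i * xs $ i + b $ i = lam"
  obtains c where "0 < c" "c < 1"
    and "\<And>z. (dana_step L a b q z - xs) \<bullet> (dana_lyapunov L a *v (dana_step L a b q z - xs))
               \<le> (1 - c) * ((z - xs) \<bullet> (dana_lyapunov L a *v (z - xs)))"
proof -
  define \<rho> where "\<rho> = \<epsilon> ^ Suc q"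
  \<comment> \<open>halving keeps c < 1 also for \<epsilon> = 0\<close>
  define c where "c = (1 - \<rho>\<^sup>2) / 2"
  have "0 \<le> \<rho>" "\<rho> < 1"
    unfolding \<rho>_def using eps_nonneg eps_less_1 by (simp_all add: power_less_one_iff del: power_Suc)
  then have "\<rho>\<^sup>2 < 1"
    by (simp add: power_less_one_iff)
  then have "0 < c" and "\<rho>\<^sup>2 \<le> 1 - c"
    by (simp_all add: c_def field_simps)
  moreover have "c < 1"
    by (simp add: c_def field_simps add_pos_nonneg)
  moreover have "(norm (laplacian_gradient L a b (dana_step L a b q z)))\<^sup>2
      \<le> (1 - c) * (norm (laplacian_gradient L a b z))\<^sup>2" for z
  proof -
    have "(norm (laplacian_gradient L a b (dana_step L a b q z)))\<^sup>2
        \<le> (\<rho> * norm (laplacian_gradient L a b z))\<^sup>2"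
      unfolding \<rho>_def by (intro power_mono norm_laplacian_gradient_dana_step) simp
    also have "\<dots> \<le> (1 - c) * (norm (laplacian_gradient L a b z))\<^sup>2"
      unfolding power_mult_distrib using \<open>\<rho>\<^sup>2 \<le> 1 - c\<close> by (intro mult_right_mono) auto
    finally show ?thesis .
  qed
  ultimately show ?thesis
    using that unfolding dana_lyapunov_eq[OF grad] by blast
qed

end

lemma dana_setting_of_loewner_bounds:
  fixes U :: "real ^ 'm ^ 'n"
  assumes "\<forall>i. 0 < a $ i" and "weighted_laplacian_connected L"
    and "CARD('m) + 1 = CARD('n)" and orth: "transpose U ** U = mat 1"
    and "\<forall>j. column j U \<bullet> ones = 0" and "0 \<le> \<epsilon>" "\<epsilon> < 1"
    and "loewner_le (- (\<epsilon> *\<^sub>R mat 1)) (mat 1 - transpose U ** L ** diag_mat a ** L ** U)"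
    and "loewner_le (mat 1 - transpose U ** L ** diag_mat a ** L ** U) (\<epsilon> *\<^sub>R mat 1)"
  shows "dana_setting a L \<epsilon>"
proof
  fix v :: "real ^ 'n"
  assume "ones \<bullet> v = 0"
  moreover have "ones \<noteq> (0 :: real ^ 'n)"
    by (simp add: ones_def vec_eq_iff)
  ultimately have "v = U *v (transpose U *v v)"
    using orthonormal_columns_span_hyperplane[OF _ assms(3) orth assms(5)] by simp
  then obtain y where v: "v = U *v y" by blast
  show "\<bar>v \<bullet> ((mat 1 - L ** diag_mat a ** L) *v v)\<bar> \<le> \<epsilon> * (v \<bullet> v)"
    using quadratic_form_bound_of_loewner_bounds[OF orth, of \<epsilon> "L ** diag_mat a ** L" y] assms(8,9)
    unfolding v by (simp add: matrix_mul_assoc)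
qed (use assms weighted_laplacian_transpose weighted_laplacian_ones in auto)

theorem theorem1:
  fixes a b :: "real ^ 'n" and d :: real and L :: "real ^ 'n ^ 'n"
    and U :: "real ^ 'm ^ 'n" and \<epsilon> :: real and q :: nat
  assumes n2: "CARD('n) \<ge> 2"
    and apos: "\<forall>i. 0 < a $ i"
    and lap: "weighted_laplacian_connected L"
    and Udim: "CARD('m) + 1 = CARD('n)"
    and Uorth: "transpose U ** U = mat 1"
    and Uperp: "\<forall>j. column j U \<bullet> ones = 0"
    and eps: "0 \<le> \<epsilon>" "\<epsilon> < 1"
    and lower: "loewner_le (- (\<epsilon> *\<^sub>R mat 1)) (mat 1 - transpose U ** L ** diag_mat a ** L ** U)"
    and upper: "loewner_le (mat 1 - transpose U ** L ** diag_mat a ** L ** U) (\<epsilon> *\<^sub>R mat 1)"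
  shows "\<exists>xs. is_optimal a b d xs \<and> (\<forall>y. is_optimal a b d y \<longrightarrow> y = xs) \<and>
           (\<forall>x. feasible d (x 0) \<and> (\<forall>k. x (Suc k) = dana_step L a b q (x k))
                \<longrightarrow> (\<forall>k. feasible d (x k))) \<and>
           (\<exists>P :: real ^ 'n ^ 'n. \<exists>c :: real.
              let V = (\<lambda>z. (z - xs) \<bullet> (P *v (z - xs))) in
              transpose P = P \<and>
              (\<exists>m>0. \<forall>z. feasible d z \<longrightarrow> m * (norm (z - xs))\<^sup>2 \<le> V z) \<and>
              V xs = 0 \<and> 0 < c \<and> c < 1 \<and>
              (\<forall>x. feasible d (x 0) \<and> (\<forall>k. x (Suc k) = dana_step L a b q (x k))
                 \<longrightarrow> (\<forall>k. V (x (Suc k)) \<le> (1 - c) * V (x k)))) \<and>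
           (\<exists>M \<rho>. 0 \<le> M \<and> 0 \<le> \<rho> \<and> \<rho> < 1 \<and>
              (\<forall>x. feasible d (x 0) \<and> (\<forall>k. x (Suc k) = dana_step L a b q (x k))
                 \<longrightarrow> (\<forall>k. norm (x k - xs) \<le> M * \<rho> ^ k * norm (x 0 - xs))))"
proof -
  interpret dana_setting a L \<epsilon>
    using dana_setting_of_loewner_bounds[OF apos lap Udim Uorth Uperp eps lower upper] .
  obtain xs lam where "feasible d xs" and grad: "\<And>i. a $ i * xs $ i + b $ i = lam"
    using exists_feasible_constant_gradient[OF a_pos, of d b] by blast
  define P where "P = dana_lyapunov L a"
  obtain c where c: "0 < c" "c < 1" and decrease:
    "\<And>z. (dana_step L a b q z - xs) \<bullet> (P *v (dana_step L a b q z - xs))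
           \<le> (1 - c) * ((z - xs) \<bullet> (P *v (z - xs)))"
    using dana_lyapunov_contraction[OF grad] unfolding P_def by blast
  obtain m where "m > 0" and coercive:
    "\<And>z. feasible d z \<Longrightarrow> m * (norm (z - xs))\<^sup>2 \<le> (z - xs) \<bullet> (P *v (z - xs))"
    using dana_lyapunov_coercive[OF \<open>feasible d xs\<close>] unfolding P_def by blast
  have iterates: "\<forall>k. feasible d (x k)"
    if "feasible d (x 0) \<and> (\<forall>k. x (Suc k) = dana_step L a b q (x k))" for x
    using that feasible_dana_iterates by blast
  note convergence = exponential_convergence_of_quadratic_lyapunov
    [where S = "feasible d" and f = "dana_step L a b q",
     OF \<open>m > 0\<close> coercive c feasible_dana_step decrease]
  show ?thesis
    unfolding Let_def
    using optimal_iff_of_constant_gradient[OF a_pos \<open>feasible d xs\<close> grad]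
      transpose_dana_lyapunov[OF L_symmetric, of a] iterates \<open>m > 0\<close> coercive c decrease
      convergence
    unfolding P_def[symmetric]
    by (intro exI[of _ xs] conjI exI[of _ P]) auto
qed

end
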